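(* If Algorithm 1 is run for any integer $T\ge\frac{2w^2\log(n/\epsilon)}{\epsilon^2}$ iterations, then for every $i\in[n]$, $\Pr[S_i-U_i\ge\epsilon T]\le\frac{\epsilon}{n}$.
   Context: Standing setup: $A\in\mathbb{R}^{m\times n}_{\ge 0}$ has no zero column and is normalized so that $\min_{i\in[n]}\|A_{:i}\|_\infty=1$, where $A_{:i}$ denotes the $i$-th column. $\epsilon\in(0,1/2]$. $\log$ is natural unless written $\log_2$. $\mu=\frac{\epsilon}{4\log(nm/\epsilon)}$, $p_j(x)=\exp\big(\frac{1}{\mu}((Ax)_j-1)\big)$, $f_\mu(x)=-\mathbf 1^Tx+\mu\sum_jp_j(x)$, $\nabla_i f_\mu(x)=-1+\sum_jA_{ji}p_j(x)$. Algorithm 1 with $T$ iterations: set $\alpha=\mu/20$, $w=\lceil\log_2(1/\epsilon)\rceil$, $x_0[i]=\frac{1-\epsilon/2}{n\|A_{:i}\|_\infty}$. For $k=0,\dots,T-1$: choose $t_k\in\{0,\dots,w-1\}$ uniformly at random, independently of the past; writing $g_i=\nabla_i f_\mu(x_k)$, define $\xi_k[i]=0$ if $|g_i|\le\epsilon$, $\xi_k[i]=g_i$ if $\epsilon<|g_i|\le 1$, $\xi_k[i]=1$ if $g_i>1$; $\xi^{(t)}_k[i]=\xi_k[i]$ if $\epsilon2^t<|\xi_k[i]|\le\epsilon2^{t+1}$ and $0$ otherwise; $x_{k+1}[i]=x_k[i]\exp(-\alpha\,\xi^{(t_k)}_k[i])$. Bucket indicators: for each $k,i$, let $b_k(i)\in\{0,\dots,w-1\}$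 be the unique $t$ with $\epsilon2^t<|\xi_k[i]|\le\epsilon2^{t+1}$ if $\xi_k[i]\ne0$, and $b_k(i)=0$ if $\xi_k[i]=0$; let $Z^{(i)}_k=1$ if $t_k=b_k(i)$ and $0$ otherwise. Define $S_i=w\sum_{k=0}^{T-1}Z^{(i)}_k\big(\min\{\nabla_i f_\mu(x_k),1\}+\epsilon\big)$ and $U_i=\sum_{k=0}^{T-1}\big(\min\{\nabla_i f_\mu(x_k),1\}+\epsilon\big)$. *)

theory Defs
  imports "HOL-Probability.Probability"
begin

text \<open>Matrix A is represented as A :: nat => nat => real with entry (j,i) = A j i,
  rows j < m, columns i < n. Vectors are nat => real indexed by i < n.\<close>

definition colnorm :: "(nat \<Rightarrow> nat \<Rightarrow> real) \<Rightarrow> nat \<Rightarrow> nat \<Rightarrow> real" where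
  "colnorm A m i = Max ((\<lambda>j. \<bar>A j i\<bar>) ` {..<m})"

definition mu :: "nat \<Rightarrow> nat \<Rightarrow> real \<Rightarrow> real" where
  "mu m n \<epsilon> = \<epsilon> / (4 * ln (real n * real m / \<epsilon>))"

definition pj :: "(nat \<Rightarrow> nat \<Rightarrow> real) \<Rightarrow> nat \<Rightarrow> nat \<Rightarrow> real \<Rightarrow> (nat \<Rightarrow> real) \<Rightarrow> nat \<Rightarrow> real" where
  "pj A m n \<epsilon> x j = exp ((1 / mu m n \<epsilon>) * ((\<Sum>i<n. A j i * x i) - 1))"

definition grad :: "(nat \<Rightarrow> nat \<Rightarrow> real) \<Rightarrow> nat \<Rightarrow> nat \<Rightarrow> real \<Rightarrow> (nat \<Rightarrow> real) \<Rightarrow> nat \<Rightarrow> real" where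
  "grad A m n \<epsilon> x i = -1 + (\<Sum>j<m. A j i * pj A m n \<epsilon> x j)"

definition xi :: "real \<Rightarrow> real \<Rightarrow> real" where
  "xi \<epsilon> g = (if \<bar>g\<bar> \<le> \<epsilon> then 0 else if g > 1 then 1 else g)"

definition xit :: "real \<Rightarrow> nat \<Rightarrow> real \<Rightarrow> real" where
  "xit \<epsilon> t v = (if \<epsilon> * 2 ^ t < \<bar>v\<bar> \<and> \<bar>v\<bar> \<le> \<epsilon> * 2 ^ (t + 1) then v else 0)"

definition wpar :: "real \<Rightarrow> nat" where
  "wpar \<epsilon> = nat \<lceil>log 2 (1 / \<epsilon>)\<rceil>"

definition alpha :: "nat \<Rightarrow> nat \<Rightarrow> real \<Rightarrow> real" where
  "alpha m n \<epsilon> = mu m n \<epsilon> / 20"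

definition x0 :: "(nat \<Rightarrow> nat \<Rightarrow> real) \<Rightarrow> nat \<Rightarrow> nat \<Rightarrow> real \<Rightarrow> nat \<Rightarrow> real" where
  "x0 A m n \<epsilon> i = (1 - \<epsilon> / 2) / (real n * colnorm A m i)"

text \<open>Iterates x_k of Algorithm 1, given the sequence of random choices ts (ts k = t_k).\<close>
fun iter :: "(nat \<Rightarrow> nat \<Rightarrow> real) \<Rightarrow> nat \<Rightarrow> nat \<Rightarrow> real \<Rightarrow> (nat \<Rightarrow> nat) \<Rightarrow> nat \<Rightarrow> nat \<Rightarrow> real" where
  "iter A m n \<epsilon> ts 0 = x0 A m n \<epsilon>"
| "iter A m n \<epsilon> ts (Suc k) = (\<lambda>i. iter A m n \<epsilon> ts k i *
      exp (- alpha m n \<epsilon> * xit \<epsilon> (ts k) (xi \<epsilon> (grad A m n \<epsilon> (iter A m n \<epsilon> ts k) i))))"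

definition bucket :: "real \<Rightarrow> real \<Rightarrow> nat" where
  "bucket \<epsilon> v = (if v = 0 then 0 else
     (THE t. t < wpar \<epsilon> \<and> \<epsilon> * 2 ^ t < \<bar>v\<bar> \<and> \<bar>v\<bar> \<le> \<epsilon> * 2 ^ (t + 1)))"

definition Zind :: "(nat \<Rightarrow> nat \<Rightarrow> real) \<Rightarrow> nat \<Rightarrow> nat \<Rightarrow> real \<Rightarrow> (nat \<Rightarrow> nat) \<Rightarrow> nat \<Rightarrow> nat \<Rightarrow> real" where
  "Zind A m n \<epsilon> ts i k =
     (if ts k = bucket \<epsilon> (xi \<epsilon> (grad A m n \<epsilon> (iter A m n \<epsilon> ts k) i)) then 1 else 0)"

definition Ssum :: "(nat \<Rightarrow> nat \<Rightarrow> real) \<Rightarrow> nat \<Rightarrow> nat \<Rightarrow> real \<Rightarrow> nat \<Rightarrow> (nat \<Rightarrow> nat) \<Rightarrow> nat \<Rightarrow> real" where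
  "Ssum A m n \<epsilon> T ts i = real (wpar \<epsilon>) * (\<Sum>k<T. Zind A m n \<epsilon> ts i k *
      (min (grad A m n \<epsilon> (iter A m n \<epsilon> ts k) i) 1 + \<epsilon>))"

definition Usum :: "(nat \<Rightarrow> nat \<Rightarrow> real) \<Rightarrow> nat \<Rightarrow> nat \<Rightarrow> real \<Rightarrow> nat \<Rightarrow> (nat \<Rightarrow> nat) \<Rightarrow> nat \<Rightarrow> real" where
  "Usum A m n \<epsilon> T ts i = (\<Sum>k<T. min (grad A m n \<epsilon> (iter A m n \<epsilon> ts k) i) 1 + \<epsilon>)"

definition tdist :: "real \<Rightarrow> nat \<Rightarrow> (nat \<Rightarrow> nat) pmf" where
  "tdist \<epsilon> T = Pi_pmf {..<T} 0 (\<lambda>_. pmf_of_set {..<wpar \<epsilon>})"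

end

theory Submission
  imports Defs
begin

text \<open>
  Write \<open>S\<^sub>i - U\<^sub>i = \<Sum>\<^sub>k (w Z\<^sub>k - 1) c\<^sub>k\<close> with \<open>c\<^sub>k = min (\<nabla>\<^sub>i f\<^sub>\<mu>(x\<^sub>k)) 1 + \<epsilon>\<close>; both \<open>c\<^sub>k\<close> and the
  bucket of \<open>\<xi>\<^sub>k[i]\<close> are determined by \<open>t\<^sub>0, \<dots>, t\<^sub>k\<^sub>-\<^sub>1\<close>, and the bucket lies in \<open>{0, \<dots>, w-1}\<close>.
  Since \<open>t\<^sub>k\<close> is uniform on that set and independent of the past, each summand has conditional
  mean zero and ranges over an interval of length \<open>w \<bar>c\<^sub>k\<bar> \<le> w (1 + \<epsilon>)\<close>. Hoeffding's lemma bounds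
  every conditional exponential moment, so the sum behaves like a sum of independent bounded
  variables (Azuma), and Chernoff's bound with \<open>\<lambda> = 4\<epsilon> / (w (1 + \<epsilon>))\<^sup>2\<close> gives
  \<open>Pr[S\<^sub>i - U\<^sub>i \<ge> \<epsilon>T] \<le> exp (-2\<epsilon>\<^sup>2T / (w (1 + \<epsilon>))\<^sup>2)\<close>, which the lower bound on \<open>T\<close> makes at most
  \<open>\<epsilon>/n\<close>.
\<close>

lemma nn_integral_exp_uniform_indicator_le:
  fixes c l :: real and b w :: nat
  assumes "l > 0" "b < w"
  shows "(\<integral>\<^sup>+y. ennreal (exp (l * ((real w * of_bool (y = b) - 1) * c))) \<partial>pmf_of_set {..<w})
           \<le> ennreal (exp (l\<^sup>2 * (real w * c)\<^sup>2 / 8))"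
proof -
  define f where "f y = (real w * of_bool (y = b) - 1) * c" for y :: nat
  define lo where "lo = min (- c) ((real w - 1) * c)"
  define hi where "hi = max (- c) ((real w - 1) * c)"
  have ne: "{..<w} \<noteq> {}" using assms by auto
  have "measure_pmf.expectation (pmf_of_set {..<w}) f = (\<Sum>y<w. f y) / real w"
    using ne by (subst integral_pmf_of_set) auto
  also have "(\<Sum>y<w. f y) = (\<Sum>y<w. real w * c * of_bool (y = b)) - real w * c"
    by (simp add: f_def sum_subtractf algebra_simps)
  also have "\<dots> = 0"
    using assms by simp
  finally have mean_zero: "measure_pmf.expectation (pmf_of_set {..<w}) f = 0" by simp
  interpret interval_bounded_random_variable "measure_pmf (pmf_of_set {..<w})" f lo hi
    by unfold_locales (auto simp: lo_def hi_def f_def ne AE_measure_pmf_iff)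
  have "hi - lo = \<bar>real w * c\<bar>"
    by (auto simp: lo_def hi_def abs_if algebra_simps)
  then show ?thesis
    using Hoeffdings_lemma_nn_integral_0[OF \<open>l > 0\<close> mean_zero] by (simp add: f_def power2_abs)
qed

lemma nn_integral_Pi_pmf_exp_sum_le:
  fixes X :: "nat \<Rightarrow> (nat \<Rightarrow> 'a) \<Rightarrow> real" and p :: "'a pmf"
  assumes adapted: "\<And>k f g. (\<And>j. j \<le> k \<Longrightarrow> f j = g j) \<Longrightarrow> X k f = X k g"
    and step: "\<And>k f. (\<integral>\<^sup>+y. ennreal (exp (X k (f(k := y)))) \<partial>p) \<le> ennreal K"
  shows "(\<integral>\<^sup>+f. ennreal (exp (\<Sum>k<T. X k f)) \<partial>Pi_pmf {..<T} d (\<lambda>_. p)) \<le> ennreal K ^ T"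
proof (induction T)
  case 0
  then show ?case by (simp add: measure_pmf.emeasure_space_1)
next
  case (Suc T)
  let ?Q = "Pi_pmf {..<T} d (\<lambda>_. p)"
  have split: "Pi_pmf {..<Suc T} d (\<lambda>_. p) = map_pmf (\<lambda>(f, y). f(T := y)) (pair_pmf ?Q p)"
  proof -
    have "Pi_pmf {..<Suc T} d (\<lambda>_. p) = map_pmf (\<lambda>(y, f). f(T := y)) (pair_pmf p ?Q)"
      by (simp add: lessThan_Suc Pi_pmf_insert)
    also have "\<dots> = map_pmf (\<lambda>(f, y). f(T := y)) (pair_pmf ?Q p)"
      by (subst pair_commute_pmf) (simp add: map_pmf_comp case_prod_unfold)
    finally show ?thesis .
  qed
  have sum_upd: "(\<Sum>k<T. X k (f(T := y))) = (\<Sum>k<T. X k f)" for f y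
    by (auto intro!: sum.cong adapted)
  have "(\<integral>\<^sup>+f. ennreal (exp (\<Sum>k<Suc T. X k f)) \<partial>Pi_pmf {..<Suc T} d (\<lambda>_. p))
      = (\<integral>\<^sup>+f. ennreal (exp (\<Sum>k<T. X k f)) * (\<integral>\<^sup>+y. ennreal (exp (X T (f(T := y)))) \<partial>p) \<partial>?Q)"
    by (simp add: split nn_integral_pair_pmf' sum_upd exp_add ennreal_mult nn_integral_cmult)
  also have "\<dots> \<le> (\<integral>\<^sup>+f. ennreal (exp (\<Sum>k<T. X k f)) * ennreal K \<partial>?Q)"
    by (intro nn_integral_mono mult_left_mono step) auto
  also have "\<dots> = (\<integral>\<^sup>+f. ennreal (exp (\<Sum>k<T. X k f)) \<partial>?Q) * ennreal K"
    by (rule nn_integral_multc) simp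
  also have "\<dots> \<le> ennreal K ^ Suc T"
    using mult_left_mono[OF Suc.IH, of "ennreal K"] by (simp add: mult.commute)
  finally show ?case .
qed

lemma tail_exponent_ge:
  fixes \<epsilon> w L T :: real
  assumes "0 < \<epsilon>" "\<epsilon> \<le> 1" "w > 0" "L \<ge> 0" "T \<ge> 2 * w\<^sup>2 * L / \<epsilon>\<^sup>2"
  shows "L \<le> 2 * \<epsilon>\<^sup>2 * T / (w * (1 + \<epsilon>))\<^sup>2"
proof -
  have "(1 + \<epsilon>)\<^sup>2 \<le> 4"
    using assms power_mono[of "1 + \<epsilon>" 2 2] by simp
  then have "L \<le> 4 * L / (1 + \<epsilon>)\<^sup>2"
    using assms mult_left_mono[of "(1 + \<epsilon>)\<^sup>2" 4 L] by (simp add: le_divide_eq mult.commute)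
  also have "\<dots> \<le> 2 * \<epsilon>\<^sup>2 * T / w\<^sup>2 / (1 + \<epsilon>)\<^sup>2"
  proof (intro divide_right_mono)
    have "2 * w\<^sup>2 * L \<le> \<epsilon>\<^sup>2 * T"
      using assms by (simp add: pos_divide_le_eq mult.commute)
    then show "4 * L \<le> 2 * \<epsilon>\<^sup>2 * T / w\<^sup>2"
      using assms by (simp add: le_divide_eq algebra_simps)
  qed simp
  finally show ?thesis
    by (simp add: power_mult_distrib)
qed

lemma wpar_pos: "0 < \<epsilon> \<Longrightarrow> \<epsilon> < 1 \<Longrightarrow> wpar \<epsilon> > 0"
  by (simp add: wpar_def)

lemma one_le_mult_two_pow_wpar:
  assumes "0 < \<epsilon>"
  shows "1 \<le> \<epsilon> * 2 ^ wpar \<epsilon>"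
proof -
  have "log 2 (1 / \<epsilon>) \<le> real (wpar \<epsilon>)"
    unfolding wpar_def by linarith
  then have "1 / \<epsilon> \<le> 2 ^ wpar \<epsilon>"
    using assms by (simp add: log_le_iff powr_realpow)
  then show ?thesis
    using assms by (simp add: field_simps)
qed

lemma ex1_dyadic_bucket:
  fixes \<epsilon> v :: real
  assumes "0 < \<epsilon>" "\<epsilon> < v" "v \<le> \<epsilon> * 2 ^ w"
  shows "\<exists>!t. t < w \<and> \<epsilon> * 2 ^ t < v \<and> v \<le> \<epsilon> * 2 ^ (t + 1)"
proof (rule ex_ex1I)
  show "\<exists>t. t < w \<and> \<epsilon> * 2 ^ t < v \<and> v \<le> \<epsilon> * 2 ^ (t + 1)"
    using assms(2,3)
  proof (induction w)
    case (Suc w)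
    then show ?case
      by (cases "v \<le> \<epsilon> * 2 ^ w") (auto intro: less_SucI)
  qed simp
next
  have "\<epsilon> * 2 ^ (s + 1) \<le> \<epsilon> * 2 ^ t" if "s < t" for s t :: nat
    using that assms(1) by (intro mult_left_mono power_increasing) auto
  then show "s = t" if "s < w \<and> \<epsilon> * 2 ^ s < v \<and> v \<le> \<epsilon> * 2 ^ (s + 1)"
    and "t < w \<and> \<epsilon> * 2 ^ t < v \<and> v \<le> \<epsilon> * 2 ^ (t + 1)" for s t
    using that by (metis linorder_neqE_nat not_le order.trans)
qed

lemma bucket_xi_less_wpar:
  assumes "0 < \<epsilon>" "\<epsilon> < 1" "g \<ge> -1"
  shows "bucket \<epsilon> (xi \<epsilon> g) < wpar \<epsilon>"
proof (cases "xi \<epsilon> g = 0")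
  case True
  then show ?thesis
    using assms wpar_pos by (simp add: bucket_def)
next
  case False
  have "\<epsilon> < \<bar>xi \<epsilon> g\<bar>" "\<bar>xi \<epsilon> g\<bar> \<le> 1"
    using False assms by (auto simp: xi_def split: if_splits)
  then have unique: "\<exists>!t. t < wpar \<epsilon> \<and> \<epsilon> * 2 ^ t < \<bar>xi \<epsilon> g\<bar> \<and> \<bar>xi \<epsilon> g\<bar> \<le> \<epsilon> * 2 ^ (t + 1)"
    using assms one_le_mult_two_pow_wpar by (intro ex1_dyadic_bucket) fastforce+
  then show ?thesis
    using False theI'[OF unique] by (simp add: bucket_def)
qed

lemma grad_ge_minus_one:
  assumes "\<And>j. j < m \<Longrightarrow> A j i \<ge> 0"
  shows "grad A m n \<epsilon> x i \<ge> -1"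
  using assms by (auto simp: grad_def pj_def intro!: sum_nonneg)

lemma iter_cong_prefix:
  "(\<And>j. j < k \<Longrightarrow> ts j = ts' j) \<Longrightarrow> iter A m n \<epsilon> ts k = iter A m n \<epsilon> ts' k"
  by (induction k) auto

definition SU_increment ::
    "(nat \<Rightarrow> nat \<Rightarrow> real) \<Rightarrow> nat \<Rightarrow> nat \<Rightarrow> real \<Rightarrow> nat \<Rightarrow> nat \<Rightarrow> (nat \<Rightarrow> nat) \<Rightarrow> real" where
  "SU_increment A m n \<epsilon> i k ts = (real (wpar \<epsilon>) * Zind A m n \<epsilon> ts i k - 1) *
      (min (grad A m n \<epsilon> (iter A m n \<epsilon> ts k) i) 1 + \<epsilon>)"

lemma Ssum_minus_Usum_eq:
  "Ssum A m n \<epsilon> T ts i - Usum A m n \<epsilon> T ts i = (\<Sum>k<T. SU_increment A m n \<epsilon> i k ts)"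
  by (simp add: Ssum_def Usum_def SU_increment_def sum_distrib_left
      sum_subtractf[symmetric] algebra_simps)

lemma SU_increment_cong_prefix:
  "(\<And>j. j \<le> k \<Longrightarrow> ts j = ts' j) \<Longrightarrow> SU_increment A m n \<epsilon> i k ts = SU_increment A m n \<epsilon> i k ts'"
  using iter_cong_prefix[of k ts ts'] by (simp add: SU_increment_def Zind_def)

lemma SU_increment_fun_upd:
  "SU_increment A m n \<epsilon> i k (ts(k := y)) =
     (real (wpar \<epsilon>) * of_bool (y = bucket \<epsilon> (xi \<epsilon> (grad A m n \<epsilon> (iter A m n \<epsilon> ts k) i))) - 1) *
     (min (grad A m n \<epsilon> (iter A m n \<epsilon> ts k) i) 1 + \<epsilon>)"
  using iter_cong_prefix[of k "ts(k := y)" ts] by (simp add: SU_increment_def Zind_def)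

lemma SU_increment_mgf_le:
  assumes "\<And>j. j < m \<Longrightarrow> A j i \<ge> 0" and "0 < \<epsilon>" "\<epsilon> < 1" "l > 0"
  shows "(\<integral>\<^sup>+y. ennreal (exp (l * SU_increment A m n \<epsilon> i k (ts(k := y)))) \<partial>pmf_of_set {..<wpar \<epsilon>})
           \<le> ennreal (exp (l\<^sup>2 * (real (wpar \<epsilon>) * (1 + \<epsilon>))\<^sup>2 / 8))"
proof -
  define w where "w = real (wpar \<epsilon>)"
  define g where "g = grad A m n \<epsilon> (iter A m n \<epsilon> ts k) i"
  define c where "c = min g 1 + \<epsilon>"
  have g: "g \<ge> -1"
    unfolding g_def using assms(1) by (rule grad_ge_minus_one)
  have "(\<integral>\<^sup>+y. ennreal (exp (l * SU_increment A m n \<epsilon> i k (ts(k := y)))) \<partial>pmf_of_set {..<wpar \<epsilon>})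
      = (\<integral>\<^sup>+y. ennreal (exp (l * ((w * of_bool (y = bucket \<epsilon> (xi \<epsilon> g)) - 1) * c)))
           \<partial>pmf_of_set {..<wpar \<epsilon>})"
    by (simp add: SU_increment_fun_upd w_def g_def c_def)
  also have "\<dots> \<le> ennreal (exp (l\<^sup>2 * (w * c)\<^sup>2 / 8))"
    unfolding w_def using assms g
    by (intro nn_integral_exp_uniform_indicator_le bucket_xi_less_wpar) auto
  also have "\<dots> \<le> ennreal (exp (l\<^sup>2 * (w * (1 + \<epsilon>))\<^sup>2 / 8))"
  proof -
    have "\<bar>w * c\<bar> \<le> \<bar>w * (1 + \<epsilon>)\<bar>"
      using g assms(2) by (auto simp: c_def w_def abs_mult intro!: mult_left_mono)
    then show ?thesis
      by (intro ennreal_leI) (simp add: abs_le_square_iff mult_left_mono)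
  qed
  finally show ?thesis
    by (simp add: w_def)
qed

lemma prob_Ssum_minus_Usum_ge_le:
  assumes "\<And>j. j < m \<Longrightarrow> A j i \<ge> 0" and "0 < \<epsilon>" "\<epsilon> < 1"
  shows "measure_pmf.prob (tdist \<epsilon> T) {ts. Ssum A m n \<epsilon> T ts i - Usum A m n \<epsilon> T ts i \<ge> \<epsilon> * real T}
           \<le> exp (- (2 * \<epsilon>\<^sup>2 * real T / (real (wpar \<epsilon>) * (1 + \<epsilon>))\<^sup>2))"
proof -
  define D where "D = (real (wpar \<epsilon>) * (1 + \<epsilon>))\<^sup>2"
  define l where "l = 4 * \<epsilon> / D"
  define F where "F ts = (\<Sum>k<T. l * SU_increment A m n \<epsilon> i k ts)" for ts
  have "D > 0"
    using assms wpar_pos by (simp add: D_def)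
  then have "l > 0"
    using assms by (simp add: l_def)
  have mgf: "(\<integral>\<^sup>+ts. ennreal (exp (F ts)) \<partial>tdist \<epsilon> T) \<le> ennreal (exp (l\<^sup>2 * D / 8)) ^ T"
    unfolding tdist_def F_def D_def using assms \<open>l > 0\<close>
    by (intro nn_integral_Pi_pmf_exp_sum_le SU_increment_mgf_le arg_cong[where f = "(*) l"]
        SU_increment_cong_prefix) auto
  have "emeasure (tdist \<epsilon> T) {ts. Ssum A m n \<epsilon> T ts i - Usum A m n \<epsilon> T ts i \<ge> \<epsilon> * real T}
      = emeasure (tdist \<epsilon> T) {ts \<in> UNIV. F ts \<ge> l * (\<epsilon> * real T)}"
    using \<open>l > 0\<close> by (simp add: Ssum_minus_Usum_eq F_def sum_distrib_left[symmetric])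
  also have "\<dots> \<le> ennreal (exp (- (l * (\<epsilon> * real T)))) * (\<integral>\<^sup>+ts. ennreal (exp (F ts)) \<partial>tdist \<epsilon> T)"
    using Chernoff_ineq_nn_integral_ge[of 1 UNIV "tdist \<epsilon> T" F "l * (\<epsilon> * real T)"] by simp
  also have "\<dots> \<le> ennreal (exp (- (l * (\<epsilon> * real T)))) * ennreal (exp (l\<^sup>2 * D / 8)) ^ T"
    by (intro mult_left_mono mgf) simp
  also have "\<dots> = ennreal (exp (- (l * (\<epsilon> * real T)) + real T * (l\<^sup>2 * D / 8)))"
    by (simp add: ennreal_power ennreal_mult'[symmetric] exp_of_nat_mult[symmetric] mult_exp_exp
        algebra_simps)
  also have "- (l * (\<epsilon> * real T)) + real T * (l\<^sup>2 * D / 8) = - (2 * \<epsilon>\<^sup>2 * real T / D)"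
    using \<open>D > 0\<close> by (simp add: l_def power2_eq_square field_simps)
  finally show ?thesis
    by (simp add: D_def measure_pmf.emeasure_eq_measure)
qed

theorem lemma4p3:
  fixes A :: "nat \<Rightarrow> nat \<Rightarrow> real" and m n T i :: nat and \<epsilon> :: real
  assumes nonneg: "\<And>j i. j < m \<Longrightarrow> i < n \<Longrightarrow> A j i \<ge> 0"
    and nozero: "\<And>i. i < n \<Longrightarrow> \<exists>j<m. A j i \<noteq> 0"
    and normalized: "n > 0 \<Longrightarrow> Min ((\<lambda>i. colnorm A m i) ` {..<n}) = 1"
    and eps: "0 < \<epsilon>" "\<epsilon> \<le> 1/2"
    and T: "real T \<ge> 2 * real (wpar \<epsilon>)^2 * ln (real n / \<epsilon>) / \<epsilon>^2"
    and i: "i < n"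
  shows "measure_pmf.prob (tdist \<epsilon> T) {ts. Ssum A m n \<epsilon> T ts i - Usum A m n \<epsilon> T ts i \<ge> \<epsilon> * real T}
           \<le> \<epsilon> / real n"
proof -
  define w where "w = real (wpar \<epsilon>)"
  define L where "L = ln (real n / \<epsilon>)"
  have "w > 0" "L \<ge> 0"
    using eps i wpar_pos by (auto simp: w_def L_def field_simps)
  have "measure_pmf.prob (tdist \<epsilon> T)
          {ts. Ssum A m n \<epsilon> T ts i - Usum A m n \<epsilon> T ts i \<ge> \<epsilon> * real T}
      \<le> exp (- (2 * \<epsilon>\<^sup>2 * real T / (w * (1 + \<epsilon>))\<^sup>2))"
    unfolding w_def using nonneg i eps by (intro prob_Ssum_minus_Usum_ge_le) auto
  also have "\<dots> \<le> exp (- L)"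
    using tail_exponent_ge[of \<epsilon> w L "real T"] T eps \<open>w > 0\<close> \<open>L \<ge> 0\<close> by (simp add: w_def L_def)
  also have "\<dots> = \<epsilon> / real n"
    using eps i by (simp add: L_def exp_minus)
  finally show ?thesis .
qed

end
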